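(* For $k\geq2$, the $4$-valent $(2k,0)$-cluster $\square(2k)$ has eigenvalue $4$ as a $D_4$-invariant eigenvalue with multiplicity at least $\lceil (k-1)/2\rceil$; that is, the space of $D_4$-invariant functions $u$ on $V(\square(2k))$ with $\Delta_{\square(2k)}u=4u$ has dimension at least $\lceil (k-1)/2\rceil$.
   Context: The $4$-valent $(m,0)$-cluster $\square(m)$ is the graph whose vertices are the barycenters of the $m^2$ unit squares of the square lattice contained in the square with vertices $0,m,(1+i)m,im$, adjacent when the squares share an edge (the $m\times m$ grid graph), with Laplacian $(\Delta_{\square(m)}u)(x)=\deg(x)u(x)-\sum_{y\sim x}u(y)$. The dihedral group $D_4$ of symmetries of the square acts on $V(\square(m))$; $u$ is $D_4$-invariant if $u(\sigma x)=u(x)$ for all $\sigma\in D_4$ and all $x$. *)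

theory Defs
  imports "HOL-Analysis.Analysis" "HOL-Library.Function_Algebras"
begin

text \<open>The m x m grid graph: the square with vertices 0, m, (1+i)m, im contains the
  unit squares [i,i+1] x [j,j+1], 0 <= i,j < m; the barycenter (i+1/2, j+1/2) is
  encoded by the pair (i,j).\<close>

definition sq_V :: "nat \<Rightarrow> (nat \<times> nat) set" where
  "sq_V m = {(i,j). i < m \<and> j < m}"

definition sq_adj :: "nat \<Rightarrow> nat \<times> nat \<Rightarrow> nat \<times> nat \<Rightarrow> bool" where
  "sq_adj m x y \<longleftrightarrow> x \<in> sq_V m \<and> y \<in> sq_V m \<and>
     ((fst x = fst y \<and> (snd y = snd x + 1 \<or> snd x = snd y + 1)) \<or>
      (snd x = snd y \<and> (fst y = fst x + 1 \<or> fst x = fst y + 1)))"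

definition sq_nbrs :: "nat \<Rightarrow> nat \<times> nat \<Rightarrow> (nat \<times> nat) set" where
  "sq_nbrs m x = {y \<in> sq_V m. sq_adj m x y}"

definition sq_deg :: "nat \<Rightarrow> nat \<times> nat \<Rightarrow> nat" where
  "sq_deg m x = card (sq_nbrs m x)"

definition sq_lap :: "nat \<Rightarrow> (nat \<times> nat \<Rightarrow> real) \<Rightarrow> nat \<times> nat \<Rightarrow> real" where
  "sq_lap m u x = real (sq_deg m x) * u x - (\<Sum>y\<in>sq_nbrs m x. u y)"

text \<open>The dihedral group D4 of symmetries of the square, acting on the vertices
  (the barycenter (i+1/2, j+1/2) is mapped by the symmetries of the square
  [0,m]^2; in index coordinates this replaces i by m-1-i etc.).\<close>
definition D4 :: "nat \<Rightarrow> (nat \<times> nat \<Rightarrow> nat \<times> nat) set" where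
  "D4 m = (let r = m - 1 in
     { (\<lambda>(i,j). (i, j)),
       (\<lambda>(i,j). (r - j, i)),
       (\<lambda>(i,j). (r - i, r - j)),
       (\<lambda>(i,j). (j, r - i)),
       (\<lambda>(i,j). (r - i, j)),
       (\<lambda>(i,j). (i, r - j)),
       (\<lambda>(i,j). (j, i)),
       (\<lambda>(i,j). (r - j, r - i)) })"

text \<open>Real-valued functions on V(square(m)), represented as functions on nat x nat
  vanishing outside the vertex set.\<close>
definition sq_functions :: "nat \<Rightarrow> (nat \<times> nat \<Rightarrow> real) set" where
  "sq_functions m = {u. \<forall>x. x \<notin> sq_V m \<longrightarrow> u x = 0}"

definition D4_invariant :: "nat \<Rightarrow> (nat \<times> nat \<Rightarrow> real) \<Rightarrow> bool" where
  "D4_invariant m u \<longleftrightarrow> (\<forall>\<sigma>\<in>D4 m. \<forall>x\<in>sq_V m. u (\<sigma> x) = u x)"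

definition D4_eigenspace :: "nat \<Rightarrow> real \<Rightarrow> (nat \<times> nat \<Rightarrow> real) set" where
  "D4_eigenspace m lam =
     {u \<in> sq_functions m. D4_invariant m u \<and> (\<forall>x\<in>sq_V m. sq_lap m u x = lam * u x)}"

text \<open>Pointwise scalar multiplication; dimension is taken in the real vector space
  of functions nat x nat => real with this scaling.\<close>
definition fscale :: "real \<Rightarrow> (nat \<times> nat \<Rightarrow> real) \<Rightarrow> (nat \<times> nat \<Rightarrow> real)" where
  "fscale c u = (\<lambda>x. c * u x)"

end

theory Submission
  imports Defs
begin

text \<open>For arbitrary \<open>h\<close> and \<open>g\<close>, the function \<open>(-1)\<^sup>i (h (i + j) + g (i - j))\<close> on \<open>\<int>\<^sup>2\<close>
  has vanishing sums over the four neighbours of every point, so it is an eigenfunction of the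
  lattice Laplacian for the eigenvalue 4. Taking for \<open>h\<close> and \<open>g\<close> signed pairs of
  \<open>2k\<close>-periodic Kronecker deltas with shift \<open>c\<close>, the function becomes \<open>2k\<close>-periodic,
  symmetric under \<open>i \<mapsto> -1 - i\<close> and, for even \<open>c\<close>, under the swap of \<open>i\<close> and \<open>j\<close>.
  Hence it is invariant under the symmetries of \<open>[0, 2k - 1]\<^sup>2\<close> and satisfies the Neumann
  condition along its boundary, so its restriction to the grid is a \<open>D\<^sub>4\<close>-invariant
  eigenfunction of the grid Laplacian for the eigenvalue 4. For the shifts \<open>c = 2t\<close> with
  \<open>t < k div 2\<close>, the values at the boundary vertices \<open>(0, 2t')\<close> form an identity matrix,
  so these \<open>k div 2 = \<lceil>(k - 1) / 2\<rceil>\<close> eigenfunctions are linearly independent.\<close>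

section \<open>Linear algebra in the space of grid functions\<close>

lemma sum_apply: "sum f A x = (\<Sum>a\<in>A. f a x)"
  by (induction A rule: infinite_finite_induct) auto

interpretation fun_space: vector_space fscale
  by unfold_locales (auto simp: fscale_def fun_eq_iff algebra_simps)

text \<open>Without a finite basis \<open>dim V\<close> is the junk value 0, hence the finite spanning set \<open>E\<close>.\<close>

lemma (in vector_space) independent_card_le_dim_if_finite_span:
  assumes "V \<subseteq> span E" "finite E" "A \<subseteq> V" "independent A"
  shows "card A \<le> dim V"
proof -
  obtain B where B: "B \<subseteq> V" "independent B" "V \<subseteq> span B" "card B = dim V"
    by (rule basis_exists)
  have "finite B"
    using independent_span_bound[OF assms(2) B(2)] B(1) assms(1) by blast
  moreover have "A \<subseteq> span B" using assms(3) B(3) by blast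
  ultimately show ?thesis
    using independent_span_bound[OF _ assms(4)] B(4) by metis
qed

lemma finite_sq_V: "finite (sq_V n)"
  by (rule finite_subset[of _ "{..<n} \<times> {..<n}"]) (auto simp: sq_V_def)

lemma sq_functions_subset_span:
  "sq_functions n \<subseteq> fun_space.span ((\<lambda>p x. if x = p then 1 else 0) ` sq_V n)"
proof
  fix u assume u: "u \<in> sq_functions n"
  have "u = (\<Sum>p\<in>sq_V n. fscale (u p) (\<lambda>x. if x = p then 1 else 0))"
    using u by (auto simp: fun_eq_iff sum_apply fscale_def sq_functions_def finite_sq_V
        if_distrib[of "\<lambda>y. _ * y"] cong: if_cong)
  also have "\<dots> \<in> fun_space.span ((\<lambda>p x. if x = p then 1 else 0) ` sq_V n)"
    by (intro fun_space.span_sum fun_space.span_scale fun_space.span_base) auto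
  finally show "u \<in> fun_space.span ((\<lambda>p x. if x = p then 1 else 0) ` sq_V n)" .
qed

lemma inj_on_if_biorthogonal:
  fixes u :: "'a \<Rightarrow> 'b \<Rightarrow> 'c::zero_neq_one"
  assumes "\<And>s t. s \<in> T \<Longrightarrow> t \<in> T \<Longrightarrow> u s (p t) = (if s = t then 1 else 0)"
  shows "inj_on u T"
proof (rule inj_onI)
  fix s t assume "s \<in> T" "t \<in> T" "u s = u t"
  then have "u t (p s) = 1" using assms[of s s] by simp
  then show "s = t" using assms[of t s] \<open>s \<in> T\<close> \<open>t \<in> T\<close> by (simp split: if_splits)
qed

lemma independent_image_if_biorthogonal:
  assumes "finite T"
    and dual: "\<And>s t. s \<in> T \<Longrightarrow> t \<in> T \<Longrightarrow> u s (p t) = (if s = t then 1 else 0)"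
  shows "fun_space.independent (u ` T)"
proof (rule fun_space.independent_if_scalars_zero)
  show "finite (u ` T)" using assms(1) by simp
next
  fix f v assume sum0: "(\<Sum>v\<in>u ` T. fscale (f v) v) = 0" and "v \<in> u ` T"
  then obtain t where t: "t \<in> T" "v = u t" by blast
  have inj: "inj_on u T" using dual by (rule inj_on_if_biorthogonal)
  have "0 = (\<Sum>v\<in>u ` T. fscale (f v) v) (p t)" by (simp add: sum0)
  also have "\<dots> = (\<Sum>s\<in>T. f (u s) * u s (p t))"
    by (simp add: sum_apply fscale_def sum.reindex[OF inj])
  also have "\<dots> = f (u t)"
    using t(1) assms(1) by (simp add: dual if_distrib[of "\<lambda>y. _ * y"] cong: sum.cong if_cong)
  finally show "f v = 0" using t(2) by simp
qed

section \<open>Eigenfunctions of the lattice Laplacian\<close>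

definition alt_sign :: "int \<Rightarrow> real" where
  "alt_sign i = (if even i then 1 else -1)"

lemma alt_sign_add_one [simp]: "alt_sign (i + 1) = - alt_sign i"
  and alt_sign_diff_one [simp]: "alt_sign (i - 1) = - alt_sign i"
  by (auto simp: alt_sign_def)

definition checker_wave :: "(int \<Rightarrow> real) \<Rightarrow> (int \<Rightarrow> real) \<Rightarrow> int \<Rightarrow> int \<Rightarrow> real" where
  "checker_wave h g i j = alt_sign i * (h (i + j) + g (i - j))"

lemma checker_wave_neighbour_sum:
  "checker_wave h g (i + 1) j + checker_wave h g (i - 1) j
     + checker_wave h g i (j + 1) + checker_wave h g i (j - 1) = 0"
  by (simp add: checker_wave_def) (simp add: algebra_simps)

lemma checker_wave_reflect:
  assumes "\<And>d. h (-1 - d) = - g d"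
  shows "checker_wave h g (-1 - i) j = checker_wave h g i j"
proof -
  have "g (-1 - (i + j)) = - h (i + j)"
    using assms[of "-1 - (i + j)"] by simp
  moreover have "alt_sign (-1 - i) = - alt_sign i"
    by (simp add: alt_sign_def)
  ultimately show ?thesis
    using assms[of "i - j"] by (simp add: checker_wave_def algebra_simps)
qed

lemma checker_wave_periodic:
  assumes "even n" "\<And>s. h (s + n) = h s" "\<And>d. g (d + n) = g d"
  shows "checker_wave h g (i + n) j = checker_wave h g i j"
proof -
  have "alt_sign (i + n) = alt_sign i" using assms(1) by (simp add: alt_sign_def)
  then show ?thesis
    using assms(2)[of "i + j"] assms(3)[of "i - j"] by (simp add: checker_wave_def algebra_simps)
qed

lemma checker_wave_swap:
  assumes "\<And>s. h s \<noteq> 0 \<Longrightarrow> even s" "\<And>d. g d \<noteq> 0 \<Longrightarrow> odd d" "\<And>d. g (- d) = - g d"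
  shows "checker_wave h g j i = checker_wave h g i j"
proof -
  have "alt_sign j * h (j + i) = alt_sign i * h (i + j)"
    using assms(1)[of "i + j"] by (cases "h (i + j) = 0") (auto simp: alt_sign_def add.commute)
  moreover have "alt_sign j * g (j - i) = alt_sign i * g (i - j)"
    using assms(2)[of "i - j"] assms(3)[of "i - j"]
    by (cases "g (i - j) = 0") (auto simp: alt_sign_def)
  ultimately show ?thesis by (simp add: checker_wave_def algebra_simps)
qed

definition periodic_delta :: "int \<Rightarrow> int \<Rightarrow> real" where
  "periodic_delta n x = (if n dvd x then 1 else 0)"

lemma periodic_delta_periodic: "periodic_delta n (x + n) = periodic_delta n x"
  by (simp add: periodic_delta_def)

lemma periodic_delta_eq_if_dvd_add: "n dvd x + y \<Longrightarrow> periodic_delta n x = periodic_delta n y"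
  unfolding periodic_delta_def
  by (metis dvd_add_right_iff dvd_minus_iff add_diff_cancel_left' diff_conv_add_uminus add.commute)

lemma periodic_delta_odd: "even n \<Longrightarrow> odd x \<Longrightarrow> periodic_delta n x = 0"
  by (auto simp: periodic_delta_def dest: dvd_trans)

lemma periodic_delta_small: "0 < \<bar>x\<bar> \<Longrightarrow> \<bar>x\<bar> < n \<Longrightarrow> periodic_delta n x = 0"
  by (auto simp: periodic_delta_def dest: dvd_imp_le_int)

definition diag_profile :: "int \<Rightarrow> int \<Rightarrow> int \<Rightarrow> real" where
  "diag_profile n c s = periodic_delta n (s - c) - periodic_delta n (s + c + 2)"

definition antidiag_profile :: "int \<Rightarrow> int \<Rightarrow> int \<Rightarrow> real" where
  "antidiag_profile n c d = periodic_delta n (d - c - 1) - periodic_delta n (d + c + 1)"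

text \<open>The two profiles are exchanged, up to sign, by \<open>s \<mapsto> -1 - s\<close>, and for even \<open>n\<close> and
  \<open>c\<close> each is supported on a single parity class: this gives the reflection and the diagonal
  symmetry of the wave.\<close>

definition eigenwave :: "int \<Rightarrow> int \<Rightarrow> int \<Rightarrow> int \<Rightarrow> real" where
  "eigenwave n c = checker_wave (diag_profile n c) (antidiag_profile n c)"

lemma eigenwave_reflect: "eigenwave n c (-1 - i) j = eigenwave n c i j"
proof -
  have "diag_profile n c (-1 - d) = - antidiag_profile n c d" for d
    unfolding diag_profile_def antidiag_profile_def
    using periodic_delta_eq_if_dvd_add[of n "-1 - d - c" "d + c + 1"]
      periodic_delta_eq_if_dvd_add[of n "-1 - d + c + 2" "d - c - 1"]
    by simp
  then show ?thesis unfolding eigenwave_def by (rule checker_wave_reflect)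
qed

lemma eigenwave_periodic:
  assumes "even n"
  shows "eigenwave n c (i + n) j = eigenwave n c i j"
  unfolding eigenwave_def
proof (rule checker_wave_periodic[OF assms])
  show "diag_profile n c (s + n) = diag_profile n c s" for s
    using periodic_delta_periodic[of n "s - c"] periodic_delta_periodic[of n "s + c + 2"]
    by (simp add: diag_profile_def algebra_simps)
  show "antidiag_profile n c (d + n) = antidiag_profile n c d" for d
    using periodic_delta_periodic[of n "d - c - 1"] periodic_delta_periodic[of n "d + c + 1"]
    by (simp add: antidiag_profile_def algebra_simps)
qed

lemma eigenwave_swap:
  assumes "even n" "even c"
  shows "eigenwave n c j i = eigenwave n c i j"
  unfolding eigenwave_def
proof (rule checker_wave_swap)
  show "even s" if "diag_profile n c s \<noteq> 0" for s
  proof -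
    have "even (s - c) \<or> even (s + c + 2)"
      using that periodic_delta_odd[OF assms(1)] by (force simp: diag_profile_def)
    then show ?thesis using assms(2) by auto
  qed
  show "odd d" if "antidiag_profile n c d \<noteq> 0" for d
  proof -
    have "even (d - c - 1) \<or> even (d + c + 1)"
      using that periodic_delta_odd[OF assms(1)] by (force simp: antidiag_profile_def)
    then show ?thesis using assms(2) by auto
  qed
  show "antidiag_profile n c (- d) = - antidiag_profile n c d" for d
    unfolding antidiag_profile_def
    using periodic_delta_eq_if_dvd_add[of n "- d - c - 1" "d + c + 1"]
      periodic_delta_eq_if_dvd_add[of n "- d + c + 1" "d - c - 1"]
    by simp
qed

lemma eigenwave_neighbour_sum:
  "eigenwave n c (i + 1) j + eigenwave n c (i - 1) j
     + eigenwave n c i (j + 1) + eigenwave n c i (j - 1) = 0"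
  unfolding eigenwave_def by (rule checker_wave_neighbour_sum)

lemma eigenwave_reflect_grid: "even n \<Longrightarrow> eigenwave n c (n - 1 - i) j = eigenwave n c i j"
  using eigenwave_periodic[of n c "-1 - i" j] eigenwave_reflect[of n c i j]
  by (simp add: algebra_simps)

section \<open>Neumann extensions and the grid Laplacian\<close>

definition path_nbrs :: "nat \<Rightarrow> nat \<Rightarrow> nat set" where
  "path_nbrs m i = {a. a < m \<and> (a = i + 1 \<or> i = a + 1)}"

lemma finite_path_nbrs: "finite (path_nbrs m i)"
  by (simp add: path_nbrs_def)

lemma sq_nbrs_eq:
  assumes "(i, j) \<in> sq_V m"
  shows "sq_nbrs m (i, j) = (\<lambda>a. (a, j)) ` path_nbrs m i \<union> Pair i ` path_nbrs m j"
  using assms by (auto simp: sq_nbrs_def sq_adj_def sq_V_def path_nbrs_def)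

lemma sq_lap_eq_path_laps:
  assumes "(i, j) \<in> sq_V m"
  shows "sq_lap m f (i, j) =
    (real (card (path_nbrs m i)) * f (i, j) - (\<Sum>a\<in>path_nbrs m i. f (a, j))) +
    (real (card (path_nbrs m j)) * f (i, j) - (\<Sum>b\<in>path_nbrs m j. f (i, b)))"
proof -
  have disj: "(\<lambda>a. (a, j)) ` path_nbrs m i \<inter> Pair i ` path_nbrs m j = {}"
    by (auto simp: path_nbrs_def)
  have inj: "inj_on (\<lambda>a. (a, j)) (path_nbrs m i)" "inj_on (Pair i) (path_nbrs m j)"
    by (auto simp: inj_on_def)
  have "real (sq_deg m (i, j)) = real (card (path_nbrs m i)) + real (card (path_nbrs m j))"
    unfolding sq_deg_def sq_nbrs_eq[OF assms]
    by (simp add: card_Un_disjoint[OF _ _ disj] finite_path_nbrs card_image[OF inj(1)]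
        card_image[OF inj(2)])
  moreover have "(\<Sum>y\<in>sq_nbrs m (i, j). f y)
      = (\<Sum>a\<in>path_nbrs m i. f (a, j)) + (\<Sum>b\<in>path_nbrs m j. f (i, b))"
    unfolding sq_nbrs_eq[OF assms]
    by (simp add: sum.union_disjoint[OF _ _ disj] finite_path_nbrs sum.reindex[OF inj(1)]
        sum.reindex[OF inj(2)])
  ultimately show ?thesis by (simp add: sq_lap_def algebra_simps)
qed

text \<open>At an end of the path the missing neighbour is compensated by the term
  \<open>(2 - card (path_nbrs m i)) * g i\<close>, which the reflection condition turns into the missing
  value of \<open>H\<close>.\<close>

lemma path_nbrs_sum_of_neumann_extension:
  fixes g :: "nat \<Rightarrow> real" and H :: "int \<Rightarrow> real"
  assumes "i < m" and g: "\<And>a. a < m \<Longrightarrow> g a = H (int a)"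
    and left: "H (-1) = H 0" and right: "H (int m) = H (int m - 1)"
  shows "(\<Sum>a\<in>path_nbrs m i. g a) + (2 - real (card (path_nbrs m i))) * g i
    = H (int i - 1) + H (int i + 1)"
proof -
  consider "i = 0" "i + 1 < m" | "i = 0" "m = 1" | "i > 0" "i + 1 < m" | "i > 0" "i + 1 = m"
    using \<open>i < m\<close> by linarith
  then show ?thesis
  proof cases
    case 1
    then have "path_nbrs m i = {1}" by (auto simp: path_nbrs_def)
    then show ?thesis using 1 g[of 0] g[of 1] left by simp
  next
    case 2
    then have "path_nbrs m i = {}" by (auto simp: path_nbrs_def)
    then show ?thesis using 2 g[of 0] left right by simp
  next
    case 3
    then have "path_nbrs m i = {i - 1, i + 1}" by (auto simp: path_nbrs_def)
    then show ?thesis using 3 g[of "i - 1"] g[of "i + 1"] by (simp add: of_nat_diff add.commute)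
  next
    case 4
    then have "path_nbrs m i = {i - 1}" by (auto simp: path_nbrs_def)
    moreover have "H (int i + 1) = H (int i)" using right[folded 4(2)] by (simp add: add.commute)
    ultimately show ?thesis using 4 g[of "i - 1"] g[of i] by simp
  qed
qed

lemma sq_lap_eq_4_of_neumann_extension:
  fixes f :: "nat \<times> nat \<Rightarrow> real" and G :: "int \<Rightarrow> int \<Rightarrow> real"
  assumes f: "\<And>i j. i < m \<Longrightarrow> j < m \<Longrightarrow> f (i, j) = G (int i) (int j)"
    and neighbour_sum: "\<And>i j. G (i + 1) j + G (i - 1) j + G i (j + 1) + G i (j - 1) = 0"
    and left: "\<And>j. G (-1) j = G 0 j" and right: "\<And>j. G (int m) j = G (int m - 1) j"
    and bottom: "\<And>i. G i (-1) = G i 0" and top: "\<And>i. G i (int m) = G i (int m - 1)"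
    and ij: "(i, j) \<in> sq_V m"
  shows "sq_lap m f (i, j) = 4 * f (i, j)"
proof -
  have "i < m" "j < m" using ij by (auto simp: sq_V_def)
  have "(\<Sum>a\<in>path_nbrs m i. f (a, j)) + (2 - real (card (path_nbrs m i))) * f (i, j)
      = G (int i - 1) (int j) + G (int i + 1) (int j)"
    by (rule path_nbrs_sum_of_neumann_extension) (use \<open>i < m\<close> \<open>j < m\<close> f left right in auto)
  moreover have "(\<Sum>b\<in>path_nbrs m j. f (i, b)) + (2 - real (card (path_nbrs m j))) * f (i, j)
      = G (int i) (int j - 1) + G (int i) (int j + 1)"
    by (rule path_nbrs_sum_of_neumann_extension) (use \<open>i < m\<close> \<open>j < m\<close> f bottom top in auto)
  ultimately show ?thesis
    using sq_lap_eq_path_laps[OF ij, of f] neighbour_sum[of "int i" "int j"]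
    by (simp add: algebra_simps)
qed

section \<open>The \<open>D\<^sub>4\<close>-invariant eigenfunctions\<close>

definition grid_wave :: "nat \<Rightarrow> nat \<Rightarrow> nat \<times> nat \<Rightarrow> real" where
  "grid_wave n c =
     (\<lambda>(i, j). if i < n \<and> j < n then eigenwave (int n) (int c) (int i) (int j) else 0)"

lemma sq_lap_grid_wave:
  assumes "even n" "even c" "x \<in> sq_V n"
  shows "sq_lap n (grid_wave n c) x = 4 * grid_wave n c x"
proof -
  let ?G = "eigenwave (int n) (int c)"
  have swap: "?G j i = ?G i j" for i j
    using eigenwave_swap assms(1,2) by simp
  have left: "?G (-1) j = ?G 0 j" for j
    using eigenwave_reflect[of _ _ 0] by simp
  have right: "?G (int n) j = ?G (int n - 1) j" for j
    using eigenwave_reflect_grid[of "int n" _ "-1"] eigenwave_reflect_grid[of "int n" _ 0]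
      left assms(1)
    by simp
  obtain i j where x: "x = (i, j)" by fastforce
  show ?thesis unfolding x
    by (rule sq_lap_eq_4_of_neumann_extension[where G = ?G, OF _ eigenwave_neighbour_sum])
      (use left right swap assms(3) x in \<open>auto simp: grid_wave_def\<close>)
qed

lemma grid_wave_D4_invariant:
  assumes "even n" "even c"
  shows "D4_invariant n (grid_wave n c)"
  unfolding D4_invariant_def
proof (intro ballI)
  let ?G = "eigenwave (int n) (int c)"
  have reflect_i: "?G (int n - 1 - i) j = ?G i j" for i j
    using eigenwave_reflect_grid assms(1) by simp
  have swap: "?G j i = ?G i j" for i j
    using eigenwave_swap assms by simp
  have reflect_j: "?G i (int n - 1 - j) = ?G i j" for i j
    using reflect_i swap by metis
  fix \<sigma> x assume \<sigma>: "\<sigma> \<in> D4 n" and "x \<in> sq_V n"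
  moreover obtain i j where x: "x = (i, j)" by fastforce
  ultimately have "i < n" "j < n" by (auto simp: sq_V_def)
  moreover have "int (n - Suc i) = int n - 1 - int i" "int (n - Suc j) = int n - 1 - int j"
    using \<open>i < n\<close> \<open>j < n\<close> by auto
  ultimately show "grid_wave n c (\<sigma> x) = grid_wave n c x"
    using \<sigma> by (auto simp: D4_def x grid_wave_def reflect_i reflect_j swap)
qed

lemma grid_wave_in_eigenspace:
  assumes "even n" "even c"
  shows "grid_wave n c \<in> D4_eigenspace n 4"
proof -
  have "grid_wave n c \<in> sq_functions n"
    by (auto simp: sq_functions_def sq_V_def grid_wave_def)
  then show ?thesis
    using grid_wave_D4_invariant[OF assms] sq_lap_grid_wave[OF assms]
    by (simp add: D4_eigenspace_def)
qed

lemma grid_wave_boundary_values: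
  assumes "2 * s + 2 \<le> k" "2 * t + 2 \<le> k"
  shows "grid_wave (2 * k) (2 * s) (0, 2 * t) = (if s = t then 1 else 0)"
proof -
  let ?\<delta> = "periodic_delta (2 * int k)"
  have "grid_wave (2 * k) (2 * s) (0, 2 * t)
      = ?\<delta> (2 * int t - 2 * int s) - ?\<delta> (2 * int t + 2 * int s + 2)
        + ?\<delta> (- 2 * int t - 2 * int s - 1) - ?\<delta> (- 2 * int t + 2 * int s + 1)"
    using assms by (simp add: grid_wave_def eigenwave_def checker_wave_def alt_sign_def
        diag_profile_def antidiag_profile_def algebra_simps)
  also have "\<dots> = ?\<delta> (2 * int t - 2 * int s)"
    using assms by (simp add: periodic_delta_small periodic_delta_odd)
  also have "\<dots> = (if s = t then 1 else 0)"
    by (cases "s = t")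
      (simp add: periodic_delta_def, simp, intro periodic_delta_small, use assms in auto)
  finally show ?thesis .
qed

lemma dim_D4_eigenspace_ge:
  "k div 2 \<le> fun_space.dim (D4_eigenspace (2 * k) 4)"
proof -
  let ?T = "{..<k div 2}" and ?u = "\<lambda>t. grid_wave (2 * k) (2 * t)" and ?p = "\<lambda>t. (0, 2 * t)"
  have dual: "?u s (?p t) = (if s = t then 1 else 0)" if "s \<in> ?T" "t \<in> ?T" for s t
    using that by (intro grid_wave_boundary_values) auto
  then have "inj_on ?u ?T"
    by (rule inj_on_if_biorthogonal)
  moreover have "card (?u ` ?T) \<le> fun_space.dim (D4_eigenspace (2 * k) 4)"
  proof (rule fun_space.independent_card_le_dim_if_finite_span)
    show "D4_eigenspace (2 * k) 4 \<subseteq> fun_space.span ((\<lambda>p x. if x = p then 1 else 0) ` sq_V (2 * k))"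
      using sq_functions_subset_span by (auto simp: D4_eigenspace_def)
    show "?u ` ?T \<subseteq> D4_eigenspace (2 * k) 4"
      using grid_wave_in_eigenspace by auto
    show "fun_space.independent (?u ` ?T)"
      using dual by (intro independent_image_if_biorthogonal[where p = ?p]) auto
  qed (simp add: finite_sq_V)
  ultimately show ?thesis
    by (simp add: card_image)
qed

theorem lemma5p2:
  fixes k :: nat
  assumes "k \<ge> 2"
  shows "\<lceil>(real k - 1) / 2\<rceil> \<le> int (vector_space.dim fscale (D4_eigenspace (2 * k) 4))"
proof -
  have "\<lceil>(real k - 1) / 2\<rceil> \<le> int (k div 2)"
    by (simp add: ceiling_le_iff)
  also have "\<dots> \<le> int (fun_space.dim (D4_eigenspace (2 * k) 4))"
    using dim_D4_eigenspace_ge by simp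
  finally show ?thesis .
qed

end
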